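(* Let $\mathbb G$ be an $H$-type group with $\dim\mathfrak v=2n$, $\dim\mathfrak z=m$, let $p_t$ be its hypoelliptic heat kernel and, for $C>0$, \[ W_{1,C}:= -\frac{C}{4} \frac{|\nabla p_{1}|^2}{p_{1}^2}+\frac{C}{2} \frac{\Delta p_{1}}{p_{1}}+ \log p_{1}. \] Then at every point $(x,z)\in\mathbb G$ with $z\neq 0$, \[ W_{1,C}=-\frac{RC}{4} \frac{p_{1,1,0}^2+p_{1,0,1}^2}{p_{1,0,0}^2}+\frac{RC}{2}\,\frac{p_{1,2,0}+p_{1,0,2}+\frac{n}{R} p_{1,1,0}+\frac{m-1}{|z|}p_{1,0,1}}{p_{1,0,0}} + \log p_{1,0,0}, \] where $R=|x|^2/4$ and all $p_{1,k_1,k_2}$ are evaluated at $(x,z)$.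
   Context: An $H$-type group is a connected, simply connected step-2 stratified Lie group whose Lie algebra $\mathfrak g$ carries an inner product $\langle\cdot,\cdot\rangle$ such that, writing $\mathfrak z$ for the centre and $\mathfrak v=\mathfrak z^\perp$, one has $[\mathfrak v,\mathfrak v]=\mathfrak z$, and for every $Z\in\mathfrak z$ the map $J_Z:\mathfrak v\to\mathfrak v$ defined by $\langle J_ZX,Y\rangle=\langle Z,[X,Y]\rangle$ is an isometry whenever $\langle Z,Z\rangle=1$. Points are written $(x,z)\in\mathbb R^{2n}\times\mathbb R^m$ in exponential coordinates with respect to an orthonormal basis. $X_1,\dots,X_{2n}$ are left-invariant vector fields forming an orthonormal basis of $\mathfrak v$; $|\nabla f|^2=\sum_j(X_jf)^2$, $\Delta=\sum_jX_j^2$. The heat kernel of $\Delta$ at the identity is \[ p_t(x,z)=\frac{1}{(4\pi)^n (2 \pi)^m t^{n+m}} \int_{\mathbb R^m} e^{\frac i t \langle \lambda, z\rangle -\frac{|x|^2}{4 t}|\lambda| \coth|\lambda|} \Big( \frac{|\lambda|}{\sinh |\lambda|}\Big)^n\,\mathrm d \lambda , \] so that $p_t(x,z)=t^{-n-m}h(R/t,|z|/t)$ with $R=|x|^2/4$ and $h$ the analytic function $h(r,s)=\frac{1}{(4\pi)^n(2\pi)^m}\int_{\mathbb R^m}e^{is\lambda_1-r|\lambda|\coth|\lambda|}(|\lambda|/\sinh|\lambda|)^n\,\mathrm d\lambda$. Define $p_{t,k_1,k_2}(x,z)=t^{-n-m-k_1-k_2}(\partial_1^{k_1}\partial_2^{k_2}h)(R/t,|z|/t)$;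 in particular $p_{1,0,0}=p_1$. *)

theory Defs
  imports "HOL-Analysis.Analysis"
begin

text \<open>H-type groups in exponential coordinates.  The Lie algebra is
  real^'v (the space v, with orthonormal coordinates) times real^'m (the centre z).
  The bracket is [(x,z),(x',z')] = (0, B x x').\<close>

text \<open>J_Z x is the vector with  J_Z x . y = Z . B x y  for all y.\<close>
definition Jmap :: "(real^'v \<Rightarrow> real^'v \<Rightarrow> real^'m) \<Rightarrow> real^'m \<Rightarrow> real^'v \<Rightarrow> real^'v" where
  "Jmap B Z x = (\<chi> j. Z \<bullet> B x (axis j 1))"

definition Htype :: "(real^'v \<Rightarrow> real^'v \<Rightarrow> real^'m) \<Rightarrow> bool" where
  "Htype B \<longleftrightarrow> bilinear B \<and> (\<forall>x y. B x y = - B y x)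
     \<and> span (range (\<lambda>(x, y). B x y)) = UNIV
     \<and> (\<forall>x. (\<forall>y. B x y = 0) \<longrightarrow> x = 0)
     \<and> (\<forall>Z x. norm Z = 1 \<longrightarrow> norm (Jmap B Z x) = norm x)"

text \<open>Group law in exponential coordinates (Baker-Campbell-Hausdorff, step 2).\<close>
definition hmul :: "(real^'v \<Rightarrow> real^'v \<Rightarrow> real^'m) \<Rightarrow> ((real^'v) \<times> (real^'m)) \<Rightarrow> ((real^'v) \<times> (real^'m)) \<Rightarrow> ((real^'v) \<times> (real^'m))" where
  "hmul B g g' = (fst g + fst g', snd g + snd g' + (1/2) *\<^sub>R B (fst g) (fst g'))"

definition Xfield :: "(real^'v \<Rightarrow> real^'v \<Rightarrow> real^'m) \<Rightarrow> 'v \<Rightarrow> ((real^'v) \<times> (real^'m) \<Rightarrow> real) \<Rightarrow> (real^'v) \<times> (real^'m) \<Rightarrow> real" where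
  "Xfield B j f g = deriv (\<lambda>\<tau>. f (hmul B g (\<tau> *\<^sub>R axis j 1, 0))) 0"

definition gradsq :: "(real^'v \<Rightarrow> real^'v \<Rightarrow> real^'m) \<Rightarrow> ((real^'v) \<times> (real^'m) \<Rightarrow> real) \<Rightarrow> (real^'v) \<times> (real^'m) \<Rightarrow> real" where
  "gradsq B f g = (\<Sum>j\<in>UNIV. (Xfield B j f g)^2)"

definition subLap :: "(real^'v \<Rightarrow> real^'v \<Rightarrow> real^'m) \<Rightarrow> ((real^'v) \<times> (real^'m) \<Rightarrow> real) \<Rightarrow> (real^'v) \<times> (real^'m) \<Rightarrow> real" where
  "subLap B f g = (\<Sum>j\<in>UNIV. Xfield B j (Xfield B j f) g)"

definition phiH :: "real \<Rightarrow> real" where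
  "phiH a = (if a = 0 then 1 else a / sinh a)"

definition psiH :: "real \<Rightarrow> real" where
  "psiH a = (if a = 0 then 1 else a * cosh a / sinh a)"

text \<open>The heat kernel p_t(x,z) (the integral is real-valued; we take its real part).\<close>
definition heat_kernel :: "nat \<Rightarrow> real \<Rightarrow> real^'v \<Rightarrow> real^('m::finite) \<Rightarrow> real" where
  "heat_kernel n t x z =
     1 / ((4*pi)^n * (2*pi)^CARD('m) * t^(n + CARD('m))) *
     Re (integral\<^sup>L lborel (\<lambda>l::real^'m.
         exp (\<i> * complex_of_real ((l \<bullet> z) / t) - complex_of_real (norm x ^ 2 / (4*t) * psiH (norm l)))
         * complex_of_real (phiH (norm l) ^ n)))"

text \<open>The function h(r,s); the index i1 plays the role of the first coordinate lambda_1.\<close>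
definition hfun :: "nat \<Rightarrow> ('m::finite) \<Rightarrow> real \<Rightarrow> real \<Rightarrow> real" where
  "hfun n i1 r s =
     1 / ((4*pi)^n * (2*pi)^CARD('m)) *
     Re (integral\<^sup>L lborel (\<lambda>l::real^'m.
         exp (\<i> * complex_of_real (s * l $ i1) - complex_of_real (r * psiH (norm l)))
         * complex_of_real (phiH (norm l) ^ n)))"

definition hder :: "nat \<Rightarrow> ('m::finite) \<Rightarrow> nat \<Rightarrow> nat \<Rightarrow> real \<Rightarrow> real \<Rightarrow> real" where
  "hder n i1 k1 k2 r s = (deriv ^^ k1) (\<lambda>r'. (deriv ^^ k2) (\<lambda>s'. hfun n i1 r' s') s) r"

definition pk :: "nat \<Rightarrow> ('m::finite) \<Rightarrow> real \<Rightarrow> nat \<Rightarrow> nat \<Rightarrow> real^'v \<Rightarrow> real^'m \<Rightarrow> real" where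
  "pk n i1 t k1 k2 x z = 1 / t ^ (n + CARD('m) + k1 + k2) *
      hder n i1 k1 k2 ((norm x ^ 2 / 4) / t) (norm z / t)"

end

theory Submission
  imports Defs "HOL-Probability.Distributions"
begin

(* Rotating the centre (Lebesgue measure is invariant under orthogonal maps) gives
   p\<^sub>1(x', z') = h(|x'|\<^sup>2/4, |z'|).  The integral curve of X\<^sub>j through (x, z) is
   u \<mapsto> (x + u e\<^sub>j, z + u w\<^sub>j) with w\<^sub>j = B(x, e\<^sub>j)/2, so X\<^sub>j p\<^sub>1 and X\<^sub>j\<^sup>2 p\<^sub>1 are the first
   and second derivatives of h along the path u \<mapsto> (|x + u e\<^sub>j|\<^sup>2/4, |z + u w\<^sub>j|), computed by the
   two-variable chain rule; the partial derivatives of h are obtained by differentiating under the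
   integral sign, which multiplies the integrand by -\<psi>(|\<lambda>|) resp. i \<lambda>\<^sub>1.  Summing over j with the
   H-type identities |J\<^sub>z x| = |z| |x|, \<langle>x, J\<^sub>z x\<rangle> = 0 and \<Sum>\<^sub>j |B(x, e\<^sub>j)|\<^sup>2 = m |x|\<^sup>2 removes
   the mixed derivative and leaves the stated formula. *)

section \<open>Invariance of Lebesgue measure under orthogonal maps\<close>

text \<open>The library proves \<open>measure_orthogonal_image\<close> only for index types of class \<open>wellorder\<close>;
  a copy of an arbitrary finite index type, ordered through \<open>to_nat\<close>, transfers it.\<close>

typedef 'a ranked = "UNIV :: 'a set" ..

instantiation ranked :: (finite) wellorder
begin

definition less_eq_ranked :: "'a ranked \<Rightarrow> 'a ranked \<Rightarrow> bool"
  where "x \<le> y \<longleftrightarrow> to_nat (Rep_ranked x) \<le> to_nat (Rep_ranked y)"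

definition less_ranked :: "'a ranked \<Rightarrow> 'a ranked \<Rightarrow> bool"
  where "x < y \<longleftrightarrow> to_nat (Rep_ranked x) < to_nat (Rep_ranked y)"

instance
proof
  fix x y z :: "'a ranked"
  show "x < y \<longleftrightarrow> x \<le> y \<and> \<not> y \<le> x" "x \<le> x" "x \<le> y \<or> y \<le> x"
    by (auto simp: less_eq_ranked_def less_ranked_def)
  show "x \<le> y \<Longrightarrow> y \<le> z \<Longrightarrow> x \<le> z"
    by (simp add: less_eq_ranked_def)
  show "x \<le> y \<Longrightarrow> y \<le> x \<Longrightarrow> x = y"
    unfolding less_eq_ranked_def by (metis order.antisym to_nat_split Rep_ranked_inject)
next
  fix P :: "'a ranked \<Rightarrow> bool" and x :: "'a ranked"
  assume step: "\<And>x. (\<And>y. y < x \<Longrightarrow> P y) \<Longrightarrow> P x"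
  show "P x"
  proof (induction "to_nat (Rep_ranked x)" arbitrary: x rule: less_induct)
    case less
    show ?case
    proof (rule step)
      fix y :: "'a ranked"
      assume "y < x"
      then show "P y"
        using less unfolding less_ranked_def by blast
    qed
  qed
qed

end

instance ranked :: (finite) finite
proof
  show "finite (UNIV :: 'a ranked set)"
    by (rule inj_on_finite[of Rep_ranked]) (auto intro: injI simp: Rep_ranked_inject)
qed

lemma bij_Abs_ranked: "bij Abs_ranked"
  by (metis Abs_ranked_inverse Rep_ranked_inverse UNIV_I bij_betw_byWitness subset_UNIV)

lemma bij_Rep_ranked: "bij Rep_ranked"
  by (metis Abs_ranked_inverse Rep_ranked_inverse UNIV_I bij_betw_byWitness subset_UNIV)

lemma borel_measurable_linear:
  fixes h :: "'a::euclidean_space \<Rightarrow> 'b::euclidean_space"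
  shows "linear h \<Longrightarrow> h \<in> borel_measurable borel"
  by (intro borel_measurable_continuous_onI linear_continuous_on linear_conv_bounded_linear[THEN iffD1])

lemma prod_Basis_cart: "(\<Prod>b\<in>(Basis :: (real^'n) set). v \<bullet> b) = (\<Prod>i\<in>UNIV. v $ i)"
  by (simp add: Basis_vec_def cart_eq_inner_axis axis_eq_axis prod.UNION_disjoint)

lemma emeasure_lborel_box_cart:
  fixes l u :: "real^'n"
  assumes "\<And>i. l $ i \<le> u $ i"
  shows "emeasure lborel (box l u) = (\<Prod>i\<in>UNIV. u $ i - l $ i)"
proof -
  have "b \<in> Basis \<Longrightarrow> l \<bullet> b \<le> u \<bullet> b" for b
    using assms by (auto simp: Basis_vec_def inner_axis)
  then show ?thesis
    by (simp add: prod_Basis_cart)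
qed

lemma lborel_distr_vec_reindex:
  fixes \<sigma> :: "'b::finite \<Rightarrow> 'a::finite"
  assumes \<sigma>: "bij \<sigma>"
  shows "distr lborel borel (\<lambda>v::real^'a. \<chi> i. v $ \<sigma> i) = lborel"
proof (rule lborel_eqI[symmetric])
  fix l u :: "real^'b"
  assume "\<And>b. b \<in> Basis \<Longrightarrow> l \<bullet> b \<le> u \<bullet> b"
  then have le: "l $ i \<le> u $ i" for i
    by (simp add: cart_eq_inner_axis)
  let ?l' = "\<chi> j. l $ inv \<sigma> j" and ?u' = "\<chi> j. u $ inv \<sigma> j"
  have "(\<lambda>v::real^'a. \<chi> i. v $ \<sigma> i) -` box l u = box ?l' ?u'"
  proof -
    have "(\<forall>i. l $ i < v $ \<sigma> i \<and> v $ \<sigma> i < u $ i) \<longleftrightarrow>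
          (\<forall>j. l $ inv \<sigma> j < v $ j \<and> v $ j < u $ inv \<sigma> j)" for v :: "real^'a"
    proof
      assume "\<forall>i. l $ i < v $ \<sigma> i \<and> v $ \<sigma> i < u $ i"
      then show "\<forall>j. l $ inv \<sigma> j < v $ j \<and> v $ j < u $ inv \<sigma> j"
        by (metis \<sigma> bij_is_surj surj_f_inv_f)
    next
      assume "\<forall>j. l $ inv \<sigma> j < v $ j \<and> v $ j < u $ inv \<sigma> j"
      then show "\<forall>i. l $ i < v $ \<sigma> i \<and> v $ \<sigma> i < u $ i"
        by (metis \<sigma> bij_is_inj inv_f_f)
    qed
    then show ?thesis
      by (auto simp: mem_box_cart)
  qed
  moreover have "(\<lambda>v::real^'a. \<chi> i. v $ \<sigma> i) \<in> borel_measurable borel"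
    by (intro borel_measurable_continuous_onI continuous_intros)
  moreover have "(\<Prod>j\<in>UNIV. u $ inv \<sigma> j - l $ inv \<sigma> j) = (\<Prod>i\<in>UNIV. u $ i - l $ i)"
    using prod.reindex_bij_betw[OF bij_betw_inv_into[OF \<sigma>], of "\<lambda>i. u $ i - l $ i"] by simp
  ultimately show "emeasure (distr lborel borel (\<lambda>v::real^'a. \<chi> i. v $ \<sigma> i)) (box l u)
      = (\<Prod>b\<in>Basis. (u - l) \<bullet> b)"
    using le by (simp add: emeasure_distr emeasure_lborel_box_cart prod_Basis_cart[of "u - l"])
qed simp

lemma lborel_distr_orthogonal_wellorder:
  fixes f :: "real^'n::{finite,wellorder} \<Rightarrow> real^'n::_"
  assumes f: "orthogonal_transformation f"
  shows "distr lborel borel f = lborel"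
proof (rule lborel_eqI[symmetric])
  have "linear f"
    using f by (rule orthogonal_transformation_linear)
  then have f_cont: "continuous_on UNIV f"
    by (simp add: linear_continuous_on linear_linear)
  have g: "orthogonal_transformation (inv f)"
    using f by (rule orthogonal_transformation_inv)
  have bij: "bij f"
    using f by (rule orthogonal_transformation_bij)
  fix l u :: "real^'n::_"
  assume le: "\<And>b. b \<in> Basis \<Longrightarrow> l \<bullet> b \<le> u \<bullet> b"
  have vimage_eq: "f -` box l u = inv f ` box l u"
    by (rule bij_vimage_eq_inv_image[OF bij])
  have "open (f -` box l u)"
    using f_cont by (simp add: continuous_on_open_vimage open_box)
  have "bounded (inv f ` box l u)"
    using g by (intro bounded_linear_image bounded_box) (simp add: orthogonal_transformation_linear linear_linear)
  then have "emeasure lborel (inv f ` box l u) \<noteq> top"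
    using emeasure_bounded_finite by (simp add: less_top)
  then have "emeasure lborel (f -` box l u) = measure lborel (inv f ` box l u)"
    unfolding vimage_eq by (rule emeasure_eq_ennreal_measure)
  also have "measure lborel (inv f ` box l u) = measure lebesgue (inv f ` box l u)"
    using \<open>open (f -` box l u)\<close> unfolding vimage_eq
    by (intro measure_completion[symmetric]) (simp add: borel_open)
  also have "\<dots> = measure lebesgue (box l u)"
    by (rule measure_orthogonal_image[OF g]) simp
  also have "\<dots> = (\<Prod>b\<in>Basis. (u - l) \<bullet> b)"
    using le by (simp add: borel_open measure_lborel_box_eq)
  finally show "emeasure (distr lborel borel f) (box l u) = (\<Prod>b\<in>Basis. (u - l) \<bullet> b)"
    using f_cont by (simp add: emeasure_distr borel_measurable_continuous_onI)
qed simp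

lemma inner_vec_reindex:
  fixes \<sigma> :: "'b::finite \<Rightarrow> 'a::finite"
  assumes "bij \<sigma>"
  shows "(\<chi> i. v $ \<sigma> i) \<bullet> (\<chi> i. w $ \<sigma> i) = v \<bullet> (w :: real^'a)"
  using sum.reindex_bij_betw[OF assms, of "\<lambda>j. v $ j * w $ j"] by (simp add: inner_vec_def)

lemma lborel_distr_orthogonal:
  fixes f :: "real^'n \<Rightarrow> real^'n"
  assumes f: "orthogonal_transformation f"
  shows "distr lborel borel f = lborel"
proof -
  define rank :: "real^'n \<Rightarrow> real^('n ranked)" where "rank v = (\<chi> i. v $ Rep_ranked i)" for v
  define unrank :: "real^('n ranked) \<Rightarrow> real^'n" where "unrank w = (\<chi> j. w $ Abs_ranked j)" for w
  have rank_unrank: "rank (unrank w) = w" and unrank_rank: "unrank (rank v) = v" for v w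
    by (simp_all add: rank_def unrank_def vec_eq_iff Rep_ranked_inverse Abs_ranked_inverse)
  have lin_rank: "linear rank" and lin_unrank: "linear unrank"
    by (auto intro!: linearI simp: rank_def unrank_def vec_eq_iff)
  have "orthogonal_transformation (rank \<circ> f \<circ> unrank)"
    unfolding orthogonal_transformation_def
  proof (intro conjI allI linear_compose lin_rank lin_unrank orthogonal_transformation_linear[OF f])
    fix a b
    show "(rank \<circ> f \<circ> unrank) a \<bullet> (rank \<circ> f \<circ> unrank) b = a \<bullet> b"
      using f inner_vec_reindex[OF bij_Rep_ranked[where 'a='n]] inner_vec_reindex[OF bij_Abs_ranked]
      by (simp add: rank_def unrank_def orthogonal_transformation_def)
  qed
  then have g: "distr lborel borel (rank \<circ> f \<circ> unrank) = lborel"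
    by (rule lborel_distr_orthogonal_wellorder)
  have unrank_lborel: "distr lborel borel unrank = lborel"
    unfolding unrank_def by (rule lborel_distr_vec_reindex[OF bij_Abs_ranked])
  have "distr lborel borel f = distr (distr lborel borel unrank) borel f"
    by (simp add: unrank_lborel)
  also have "\<dots> = distr lborel borel (f \<circ> unrank)"
    using lin_unrank orthogonal_transformation_linear[OF f] by (intro distr_distr) (simp_all add: borel_measurable_linear)
  also have "f \<circ> unrank = unrank \<circ> (rank \<circ> f \<circ> unrank)"
    by (simp add: fun_eq_iff unrank_rank)
  also have "distr lborel borel \<dots> = distr (distr lborel borel (rank \<circ> f \<circ> unrank)) borel unrank"
    using lin_rank lin_unrank orthogonal_transformation_linear[OF f]
    by (intro distr_distr[symmetric]) (simp_all add: borel_measurable_linear linear_compose)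
  finally show ?thesis
    by (simp add: g unrank_lborel)
qed

lemma integral_orthogonal_transformation:
  fixes f :: "real^'n \<Rightarrow> real^'n" and g :: "real^'n \<Rightarrow> 'b::{banach, second_countable_topology}"
  assumes f: "orthogonal_transformation f" and g: "g \<in> borel_measurable borel"
  shows "(\<integral>l. g (f l) \<partial>lborel) = (\<integral>l. g l \<partial>lborel)"
proof -
  have "(\<integral>l. g (f l) \<partial>lborel) = (\<integral>l. g l \<partial>distr lborel borel f)"
    using g borel_measurable_linear[OF orthogonal_transformation_linear[OF f]]
    by (subst integral_distr) auto
  then show ?thesis
    by (simp add: lborel_distr_orthogonal[OF f])
qed

section \<open>Differentiation under the integral sign\<close>

lemma tendsto_integral_at_dominated:
  fixes s :: "real \<Rightarrow> 'a \<Rightarrow> real"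
  assumes d: "d > 0"
    and s_meas: "\<And>y. y \<in> ball y0 d \<Longrightarrow> s y \<in> borel_measurable M"
    and w: "integrable M w"
    and s_bound: "\<And>y l. y \<in> ball y0 d \<Longrightarrow> norm (s y l) \<le> w l"
    and s_lim: "\<And>l. ((\<lambda>y. s y l) \<longlongrightarrow> 0) (at y0)"
  shows "((\<lambda>y. \<integral>l. s y l \<partial>M) \<longlongrightarrow> 0) (at y0)"
proof (subst tendsto_at_iff_sequentially, intro allI impI)
  fix X :: "nat \<Rightarrow> real"
  assume "\<forall>i. X i \<in> UNIV - {y0}" and lim: "X \<longlonglongrightarrow> y0"
  then have X: "filterlim X (at y0) sequentially"
    by (auto simp: filterlim_at intro!: always_eventually)
  have "\<forall>\<^sub>F i in sequentially. X i \<in> ball y0 d"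
    using d by (intro topological_tendstoD[OF lim]) auto
  then obtain N where N: "\<And>i. N \<le> i \<Longrightarrow> X i \<in> ball y0 d"
    by (auto simp: eventually_sequentially)
  have "(\<lambda>i. \<integral>l. s (X (i + N)) l \<partial>M) \<longlonglongrightarrow> (\<integral>l. 0 \<partial>M)"
  proof (rule integral_dominated_convergence[OF _ _ w])
    show "AE l in M. (\<lambda>i. s (X (i + N)) l) \<longlonglongrightarrow> 0"
      by (intro AE_I2 filterlim_compose[OF s_lim] filterlim_compose[OF X] filterlim_add_const_nat_at_top)
  qed (use N s_meas s_bound in auto)
  then show "((\<lambda>y. \<integral>l. s y l \<partial>M) \<circ> X) \<longlonglongrightarrow> 0"
    by (simp add: o_def LIMSEQ_offset)
qed

lemma norm_linearization_le:
  fixes g :: "real \<Rightarrow> 'b::real_normed_vector"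
  assumes g: "\<And>u. u \<in> ball u0 d \<Longrightarrow> (g has_vector_derivative g' u) (at u)"
    and bound: "\<And>u. u \<in> ball u0 d \<Longrightarrow> norm (g' u) \<le> c" and y: "y \<in> ball u0 d"
  shows "norm (g y - g u0 - (y - u0) *\<^sub>R g' u0) \<le> norm (y - u0) * (2 * c)"
proof (rule vector_differentiable_bound_linearization[where S="ball u0 d"])
  show u0: "u0 \<in> ball u0 d"
    using y by (auto intro: le_less_trans[OF zero_le_dist])
  show "(g has_vector_derivative g' x) (at x within ball u0 d)" if "x \<in> ball u0 d" for x
    using g[OF that] by (rule has_vector_derivative_at_within)
  show "closed_segment u0 y \<subseteq> ball u0 d"
    using y u0 by (intro closed_segment_subset) auto
  show "norm (g' x - g' u0) \<le> 2 * c" if "x \<in> ball u0 d" for x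
    using norm_triangle_ineq4[of "g' x" "g' u0"] bound[OF that] bound[OF u0] by linarith
qed

lemma has_vector_derivative_integral:
  fixes f f' :: "real \<Rightarrow> 'a \<Rightarrow> 'b::{banach,second_countable_topology}" and w :: "'a \<Rightarrow> real"
  assumes d: "d > 0"
    and f_deriv: "\<And>u l. u \<in> ball u0 d \<Longrightarrow> ((\<lambda>u. f u l) has_vector_derivative f' u l) (at u)"
    and f_meas: "\<And>u. u \<in> ball u0 d \<Longrightarrow> f u \<in> borel_measurable M"
    and f'_meas: "f' u0 \<in> borel_measurable M"
    and w: "integrable M w"
    and f'_bound: "\<And>u l. u \<in> ball u0 d \<Longrightarrow> norm (f' u l) \<le> w l"
    and f_int: "integrable M (f u0)"
  shows "((\<lambda>u. \<integral>l. f u l \<partial>M) has_vector_derivative (\<integral>l. f' u0 l \<partial>M)) (at u0)"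
proof -
  have u0: "u0 \<in> ball u0 d"
    using d by simp
  have w_nonneg: "0 \<le> w l" for l
    using f'_bound[OF u0, of l] norm_ge_zero order_trans by blast
  have f'_int: "integrable M (f' u0)"
    by (rule Bochner_Integration.integrable_bound[OF w f'_meas])
       (use f'_bound[OF u0] w_nonneg in \<open>auto intro: order_trans\<close>)
  define r where "r y l = f y l - f u0 l - (y - u0) *\<^sub>R f' u0 l" for y l
  have r_bound: "norm (r y l) \<le> norm (y - u0) * (2 * w l)" if "y \<in> ball u0 d" for y l
    unfolding r_def using f_deriv f'_bound that by (rule norm_linearization_le)
  have r_meas: "r y \<in> borel_measurable M" if "y \<in> ball u0 d" for y
    unfolding r_def using f_meas[OF that] f_meas[OF u0] f'_meas by measurable
  have r_int: "integrable M (r y)" if "y \<in> ball u0 d" for y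
    by (rule Bochner_Integration.integrable_bound[where f="\<lambda>l. norm (y - u0) * (2 * w l)"])
       (use w r_meas[OF that] r_bound[OF that] w_nonneg in \<open>auto intro: order_trans\<close>)
  have remainder_lim: "((\<lambda>y. \<integral>l. norm (r y l) / norm (y - u0) \<partial>M) \<longlongrightarrow> 0) (at u0)"
  proof (rule tendsto_integral_at_dominated[OF d _ integrable_mult_right[OF w, of 2]])
    show "norm (norm (r y l) / norm (y - u0)) \<le> 2 * w l" if "y \<in> ball u0 d" for y l
      using r_bound[OF that, of l] w_nonneg[of l] by (cases "y = u0") (simp_all add: divide_le_eq mult.commute)
    show "((\<lambda>y. norm (r y l) / norm (y - u0)) \<longlongrightarrow> 0) (at u0)" for l
      using f_deriv[OF u0, of l] unfolding has_vector_derivative_def has_derivative_iff_norm r_def by simp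
  qed (use r_meas in measurable)
  let ?F = "\<lambda>u. \<integral>l. f u l \<partial>M" and ?F' = "\<integral>l. f' u0 l \<partial>M"
  have quotient_le: "norm (?F y - ?F u0 - (y - u0) *\<^sub>R ?F') / norm (y - u0)
      \<le> (\<integral>l. norm (r y l) / norm (y - u0) \<partial>M)" if y: "y \<in> ball u0 d" for y
  proof -
    have "f y = (\<lambda>l. r y l + f u0 l + (y - u0) *\<^sub>R f' u0 l)"
      by (simp add: r_def)
    then have "integrable M (f y)"
      using r_int[OF y] f_int f'_int by simp
    then have "?F y - ?F u0 - (y - u0) *\<^sub>R ?F' = (\<integral>l. r y l \<partial>M)"
      unfolding r_def using f_int f'_int by simp
    then show ?thesis
      by (simp add: divide_right_mono)
  qed
  have "\<forall>\<^sub>F y in at u0. norm (?F y - ?F u0 - (y - u0) *\<^sub>R ?F') / norm (y - u0)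
      \<le> (\<integral>l. norm (r y l) / norm (y - u0) \<partial>M)"
    using eventually_at_ball[OF d, of u0 UNIV] by eventually_elim (blast intro: quotient_le)
  then have "((\<lambda>y. norm (?F y - ?F u0 - (y - u0) *\<^sub>R ?F') / norm (y - u0)) \<longlongrightarrow> 0) (at u0)"
    by (intro tendsto_sandwich[OF _ _ tendsto_const remainder_lim]) auto
  then show ?thesis
    by (simp add: has_vector_derivative_def has_derivative_iff_norm bounded_linear_scaleR_left)
qed

section \<open>Decay of the heat kernel amplitude\<close>

lemma sinh_ge_self: "0 \<le> (a::real) \<Longrightarrow> a \<le> sinh a"
  using real_le_x_sinh[of a] by (simp add: sinh_field_def exp_minus)

lemma psiH_bounds:
  assumes "0 \<le> a"
  shows "0 \<le> psiH a" "psiH a \<le> 1 + a"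
proof -
  show "0 \<le> psiH a"
    using assms by (auto simp: psiH_def)
  show "psiH a \<le> 1 + a"
  proof (cases "a = 0")
    case False
    then have a: "a > 0" and s: "sinh a > 0"
      using assms by simp_all
    have "a * (cosh a - sinh a) \<le> a"
      using a by (simp add: cosh_minus_sinh mult_left_le)
    also have "\<dots> \<le> sinh a"
      using sinh_ge_self a by simp
    finally have "a * cosh a \<le> (1 + a) * sinh a"
      by (simp add: algebra_simps)
    then show ?thesis
      using s False by (simp add: psiH_def divide_le_eq)
  qed (simp add: psiH_def)
qed

lemma phiH_bounds:
  assumes "0 \<le> a"
  shows "0 \<le> phiH a" "phiH a \<le> 1" "phiH a \<le> 4 * (1 + a) * exp (-a)"
proof -
  show "0 \<le> phiH a"
    using assms by (auto simp: phiH_def)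
  show le1: "phiH a \<le> 1"
    using assms sinh_ge_self[of a] by (auto simp: phiH_def divide_le_eq)
  show "phiH a \<le> 4 * (1 + a) * exp (-a)"
  proof (cases "a \<le> 1")
    case True
    have "exp a \<le> 3"
      using True exp_le by (meson exp_le_cancel_iff order_trans)
    then have "1 \<le> 4 * (1 + a) * exp (-a)"
      using assms by (simp add: exp_minus field_simps)
    with le1 show ?thesis
      by linarith
  next
    case False
    then have s: "sinh a > 0"
      by simp
    have "exp (-2) \<le> (1/2::real)"
      using exp_ge_add_one_self[of 2] by (simp add: exp_minus field_simps)
    moreover have "exp (-2*a) \<le> exp (-2)"
      using False by simp
    ultimately have "exp (-2*a) \<le> 1/2"
      by linarith
    then have "0 \<le> (1 + a) * (1 - 2 * exp (-2*a))"
      using False by (intro mult_nonneg_nonneg) auto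
    then have "a \<le> 2 * (1 + a) * (1 - exp (-2*a))"
      by (simp add: algebra_simps)
    also have "\<dots> = 4 * (1 + a) * exp (-a) * sinh a"
    proof -
      have "exp (-2*a) = exp (-a) * exp (-a)"
        by (simp flip: exp_add)
      then show ?thesis
        by (simp add: sinh_field_def exp_minus field_simps)
    qed
    finally show ?thesis
      using s False by (simp add: phiH_def divide_le_eq)
  qed
qed

lemma one_plus_power_le_exp:
  assumes "0 \<le> a"
  shows "(1 + a) ^ k \<le> (4 * real k + 4) ^ k * exp (a / 4)"
proof -
  have "1 + a \<le> (4 * real (Suc k)) * (1 + (a/4) / real (Suc k))"
    using assms by (simp add: field_simps)
  then have "(1 + a) ^ k \<le> (4 * real (Suc k)) ^ k * (1 + (a/4) / real (Suc k)) ^ k"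
    using assms by (metis power_mono power_mult_distrib add_nonneg_nonneg zero_le_one)
  also have "(1 + (a/4) / real (Suc k)) ^ k \<le> (1 + (a/4) / real (Suc k)) ^ Suc k"
    using assms by (intro power_increasing) auto
  also have "\<dots> \<le> exp (a/4)"
    using assms by (intro exp_ge_one_plus_x_over_n_power_n) auto
  finally show ?thesis
    by (simp add: mult_left_mono algebra_simps)
qed

lemma nn_integral_exp_neg_abs_finite:
  assumes c: "(c::real) > 0"
  shows "(\<integral>\<^sup>+t. ennreal (exp (-c * \<bar>t\<bar>)) \<partial>lborel) < \<infinity>"
proof -
  let ?e = "exponential_density c"
  have e: "(\<integral>\<^sup>+t. ennreal (?e t) \<partial>lborel) = 1"
    using nn_integral_erlang_ith_moment[OF c, of 0 0] by (simp add: exponential_density_def)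
  have e_neg: "(\<integral>\<^sup>+t. ennreal (?e (-t)) \<partial>lborel) = 1"
  proof -
    have "(\<integral>\<^sup>+t. ennreal (?e (-t)) \<partial>lborel) = (\<integral>\<^sup>+t. ennreal (?e t) \<partial>distr lborel borel uminus)"
      by (subst nn_integral_distr) auto
    then show ?thesis
      using e by (simp add: lborel_distr_uminus)
  qed
  have "exp (-c * \<bar>t\<bar>) = (1/c) * (?e t + ?e (-t))" if "t \<noteq> 0" for t
    using c that by (cases "t < 0") (auto simp: exponential_density_def erlang_density_def)
  then have le: "ennreal (exp (-c * \<bar>t\<bar>)) \<le> ennreal (1/c) * (ennreal (?e t) + ennreal (?e (-t)))" for t
    using c by (cases "t = 0")
      (auto simp: exponential_density_def erlang_density_def ennreal_mult[symmetric] ennreal_plus[symmetric] simp del: ennreal_plus)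
  have "(\<integral>\<^sup>+t. ennreal (exp (-c * \<bar>t\<bar>)) \<partial>lborel)
      \<le> (\<integral>\<^sup>+t. ennreal (1/c) * (ennreal (?e t) + ennreal (?e (-t))) \<partial>lborel)"
    by (intro nn_integral_mono le)
  also have "\<dots> = ennreal (1/c) * 2"
    by (subst nn_integral_cmult) (auto simp: nn_integral_add e e_neg)
  also have "\<dots> < \<infinity>"
    by (simp add: ennreal_mult_less_top)
  finally show ?thesis .
qed

lemma integrable_exp_neg_norm:
  assumes c: "(c::real) > 0"
  shows "integrable lborel (\<lambda>l::real^'m. exp (-c * norm l))"
proof -
  define c' where "c' = c / CARD('m)"
  have c': "c' > 0"
    using c by (simp add: c'_def)
  have bound: "exp (-c * norm l) \<le> (\<Prod>b\<in>(Basis::(real^'m) set). exp (-c' * \<bar>l \<bullet> b\<bar>))" for l :: "real^'m"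
  proof -
    have "(\<Sum>b\<in>(Basis::(real^'m) set). \<bar>l \<bullet> b\<bar>) \<le> (\<Sum>b\<in>(Basis::(real^'m) set). norm l)"
      by (intro sum_mono Basis_le_norm)
    then have "c' * (\<Sum>b\<in>(Basis::(real^'m) set). \<bar>l \<bullet> b\<bar>) \<le> c * norm l"
      using c by (simp add: c'_def field_simps)
    then show ?thesis
      by (simp add: exp_sum[symmetric] sum_negf sum_distrib_left[symmetric])
  qed
  have "(\<integral>\<^sup>+l. ennreal (norm (exp (-c * norm l))) \<partial>(lborel::(real^'m) measure))
      \<le> (\<integral>\<^sup>+l. (\<Prod>b\<in>(Basis::(real^'m) set). ennreal (exp (-c' * \<bar>l \<bullet> b\<bar>))) \<partial>lborel)"
    by (intro nn_integral_mono) (use bound in \<open>auto simp: prod_ennreal intro: ennreal_leI\<close>)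
  also have "\<dots> = (\<Prod>b\<in>(Basis::(real^'m) set). (\<integral>\<^sup>+t. ennreal (exp (-c' * \<bar>t\<bar>)) \<partial>lborel))"
    by (rule nn_integral_lborel_prod) auto
  also have "\<dots> < \<infinity>"
    using nn_integral_exp_neg_abs_finite[OF c'] by (simp add: less_top power_less_top_ennreal)
  finally show ?thesis
    unfolding integrable_iff_bounded by simp
qed

lemma integrable_power_exp_neg_norm:
  "integrable lborel (\<lambda>l::real^'m. (1 + norm l) ^ k * exp (- norm l / 2))"
proof (rule Bochner_Integration.integrable_bound)
  let ?C = "(4 * real k + 4) ^ k"
  show "integrable lborel (\<lambda>l::real^'m. ?C * exp (-(1/4) * norm l))"
    using integrable_exp_neg_norm[of "1/4"] by simp
  have "(1 + norm l) ^ k * exp (- norm l / 2) \<le> (?C * exp (norm l / 4)) * exp (- norm l / 2)" for l :: "real^'m"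
    using one_plus_power_le_exp[of "norm l" k] by (intro mult_right_mono) auto
  then show "AE l in lborel. norm ((1 + norm l) ^ k * exp (- norm l / 2)) \<le> norm (?C * exp (-(1/4) * norm (l::real^'m)))"
    by (simp add: mult.assoc flip: exp_add)
qed measurable

section \<open>Heat moments\<close>

lemma psiH_measurable [measurable]: "psiH \<in> borel_measurable borel"
proof -
  have [measurable]: "(\<lambda>a::real. a * cosh a) \<in> borel_measurable borel" "(\<lambda>a::real. sinh a) \<in> borel_measurable borel"
    by (intro borel_measurable_continuous_onI continuous_intros)+
  have eq: "psiH = (\<lambda>a. if a = 0 then 1 else a * cosh a / sinh a)"
    by (auto simp: psiH_def fun_eq_iff)
  show ?thesis
    unfolding eq by measurable
qed

lemma phiH_measurable [measurable]: "phiH \<in> borel_measurable borel"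
proof -
  have [measurable]: "(\<lambda>a::real. sinh a) \<in> borel_measurable borel"
    by (intro borel_measurable_continuous_onI continuous_intros)
  have eq: "phiH = (\<lambda>a. if a = 0 then 1 else a / sinh a)"
    by (auto simp: phiH_def fun_eq_iff)
  show ?thesis
    unfolding eq by measurable
qed

definition heat_integrand :: "nat \<Rightarrow> 'm::finite \<Rightarrow> real \<Rightarrow> real \<Rightarrow> real^'m \<Rightarrow> complex" where
  "heat_integrand n i r s l =
     exp (\<i> * complex_of_real (s * l $ i) - complex_of_real (r * psiH (norm l)))
     * complex_of_real (phiH (norm l) ^ n)"

definition heat_moment :: "nat \<Rightarrow> 'm::finite \<Rightarrow> (real^'m \<Rightarrow> complex) \<Rightarrow> real \<Rightarrow> real \<Rightarrow> real" where
  "heat_moment n i P r s =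
     1 / ((4*pi)^n * (2*pi)^CARD('m)) * Re (\<integral>l. heat_integrand n i r s l * P l \<partial>lborel)"

definition poly_growth :: "(real^'m::finite \<Rightarrow> complex) \<Rightarrow> nat \<Rightarrow> bool" where
  "poly_growth P k \<longleftrightarrow> P \<in> borel_measurable borel \<and> (\<exists>K. \<forall>l. norm (P l) \<le> K * (1 + norm l) ^ k)"

text \<open>Differentiating a heat moment in \<open>r\<close> (resp. \<open>s\<close>) multiplies its amplitude by the
  symbol \<open>-\<psi>(|\<lambda>|)\<close> (resp. \<open>i \<lambda>\<^sub>i\<close>).\<close>

definition r_symbol :: "(real^'m::finite \<Rightarrow> complex) \<Rightarrow> real^'m \<Rightarrow> complex" where
  "r_symbol P l = - complex_of_real (psiH (norm l)) * P l"

definition s_symbol :: "'m::finite \<Rightarrow> (real^'m \<Rightarrow> complex) \<Rightarrow> real^'m \<Rightarrow> complex" where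
  "s_symbol i P l = \<i> * complex_of_real (l $ i) * P l"

lemma hfun_eq_heat_moment: "hfun n i r s = heat_moment n i (\<lambda>_. 1) r s"
  by (simp add: hfun_def heat_moment_def heat_integrand_def)

lemma r_symbol_s_symbol_commute: "r_symbol (s_symbol i P) = s_symbol i (r_symbol P)"
  by (simp add: r_symbol_def s_symbol_def fun_eq_iff algebra_simps)

lemma poly_growth_one: "poly_growth (\<lambda>_. 1) 0"
  by (auto simp: poly_growth_def intro!: exI[of _ 1])

lemma norm_r_symbol_le:
  assumes "norm (P l) \<le> K * (1 + norm l) ^ k"
  shows "norm (r_symbol P l) \<le> K * (1 + norm l) ^ Suc k"
proof -
  have "norm (r_symbol P l) \<le> (1 + norm l) * (K * (1 + norm l) ^ k)"
    unfolding r_symbol_def norm_mult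
    using psiH_bounds[of "norm l"] assms by (intro mult_mono) (auto intro: order_trans[OF norm_ge_zero])
  then show ?thesis
    by (simp add: algebra_simps)
qed

lemma norm_s_symbol_le:
  assumes "norm (P l) \<le> K * (1 + norm l) ^ k"
  shows "norm (s_symbol i P l) \<le> K * (1 + norm l) ^ Suc k"
proof -
  have "norm (s_symbol i P l) \<le> (1 + norm l) * (K * (1 + norm l) ^ k)"
    unfolding s_symbol_def norm_mult
    using component_le_norm_cart[of l i] assms by (intro mult_mono) (auto intro: order_trans[OF norm_ge_zero])
  then show ?thesis
    by (simp add: algebra_simps)
qed

lemma poly_growth_r_symbol:
  assumes "poly_growth P k"
  shows "poly_growth (r_symbol P) (Suc k)"
proof -
  obtain K where "\<And>l. norm (P l) \<le> K * (1 + norm l) ^ k" and [measurable]: "P \<in> borel_measurable borel"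
    using assms by (auto simp: poly_growth_def)
  moreover have "r_symbol P \<in> borel_measurable borel"
    unfolding r_symbol_def[abs_def] by measurable
  ultimately show ?thesis
    unfolding poly_growth_def using norm_r_symbol_le by blast
qed

lemma poly_growth_s_symbol:
  assumes "poly_growth P k"
  shows "poly_growth (s_symbol i P) (Suc k)"
proof -
  obtain K where "\<And>l. norm (P l) \<le> K * (1 + norm l) ^ k" and [measurable]: "P \<in> borel_measurable borel"
    using assms by (auto simp: poly_growth_def)
  moreover have "s_symbol i P \<in> borel_measurable borel"
    unfolding s_symbol_def[abs_def] by measurable
  ultimately show ?thesis
    unfolding poly_growth_def using norm_s_symbol_le by blast
qed

lemma heat_integrand_measurable [measurable]: "heat_integrand n i r s \<in> borel_measurable borel"
  unfolding heat_integrand_def by measurable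

lemma norm_heat_integrand_le:
  assumes n: "n \<ge> 1" and r: "r \<ge> -1/2"
  shows "norm (heat_integrand n i r s l) \<le> 4 * exp (1/2) * (1 + norm l) * exp (- norm l / 2)"
proof -
  let ?a = "norm l"
  have psi: "0 \<le> psiH ?a" "psiH ?a \<le> 1 + ?a" and phi: "0 \<le> phiH ?a" "phiH ?a \<le> 1"
    and phi_exp: "phiH ?a \<le> 4 * (1 + ?a) * exp (- ?a)"
    using psiH_bounds[of ?a] phiH_bounds[of ?a] by auto
  have "- r * psiH ?a \<le> 1/2 * psiH ?a"
    using r psi by (intro mult_right_mono) auto
  also have "\<dots> \<le> (1 + ?a) / 2"
    using psi by simp
  finally
  have "exp (- r * psiH ?a) \<le> exp ((1 + ?a) / 2)"
    by simp
  moreover have "phiH ?a ^ n \<le> 4 * (1 + ?a) * exp (- ?a)"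
    using power_decreasing[of 1 n "phiH ?a"] n phi phi_exp by simp
  ultimately have "exp (- r * psiH ?a) * phiH ?a ^ n \<le> exp ((1 + ?a) / 2) * (4 * (1 + ?a) * exp (- ?a))"
    using phi by (intro mult_mono) auto
  also have "\<dots> = 4 * exp (1/2) * (1 + ?a) * exp (- ?a / 2)"
    by (simp add: field_simps flip: exp_add)
  finally show ?thesis
    using phi by (simp add: heat_integrand_def norm_mult norm_power)
qed

lemma norm_heat_integrand_mult_le:
  assumes "n \<ge> 1" and "r \<ge> -1/2" and "norm p \<le> K * (1 + norm l) ^ k"
  shows "norm (heat_integrand n i r s l * p)
    \<le> 4 * exp (1/2) * K * ((1 + norm l) ^ Suc k * exp (- norm l / 2))"
proof -
  have "norm (heat_integrand n i r s l * p)
      \<le> (4 * exp (1/2) * (1 + norm l) * exp (- norm l / 2)) * (K * (1 + norm l) ^ k)"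
    unfolding norm_mult by (intro mult_mono norm_heat_integrand_le assms) auto
  then show ?thesis
    by (simp add: algebra_simps)
qed

lemma integrable_heat_integrand:
  assumes n: "n \<ge> 1" and r: "r \<ge> -1/2" and P: "poly_growth P k"
  shows "integrable lborel (\<lambda>l. heat_integrand n i r s l * P l)"
proof -
  obtain K where K: "\<And>l. norm (P l) \<le> K * (1 + norm l) ^ k" and [measurable]: "P \<in> borel_measurable borel"
    using P by (auto simp: poly_growth_def)
  show ?thesis
  proof (rule Bochner_Integration.integrable_bound)
    show "integrable lborel (\<lambda>l::real^'a. (4 * exp (1/2) * K) * ((1 + norm l) ^ Suc k * exp (- norm l / 2)))"
      by (intro integrable_mult_right integrable_power_exp_neg_norm)
    have "norm (heat_integrand n i r s l * P l)
        \<le> 4 * exp (1/2) * K * ((1 + norm l) ^ Suc k * exp (- norm l / 2))" for l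
      by (rule norm_heat_integrand_mult_le[OF n r K])
    then show "AE l in lborel. norm (heat_integrand n i r s l * P l)
        \<le> norm ((4 * exp (1/2) * K) * ((1 + norm l) ^ Suc k * exp (- norm l / 2)))"
      by (auto intro: order_trans[OF _ abs_ge_self])
  qed measurable
qed

lemma norm_heat_integrand_symbols_le:
  assumes n: "n \<ge> 1" and r: "r \<ge> -1/2" and K: "norm (P l) \<le> K * (1 + norm l) ^ k"
  shows "norm (complex_of_real \<alpha> * (heat_integrand n i r s l * r_symbol P l)
      + complex_of_real \<beta> * (heat_integrand n i r s l * s_symbol i P l))
    \<le> (\<bar>\<alpha>\<bar> + \<bar>\<beta>\<bar>) * (4 * exp (1/2) * K * ((1 + norm l) ^ Suc (Suc k) * exp (- norm l / 2)))"
proof -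
  let ?W = "4 * exp (1/2) * K * ((1 + norm l) ^ Suc (Suc k) * exp (- norm l / 2))"
  have "norm (heat_integrand n i r s l * r_symbol P l) \<le> ?W"
    by (rule norm_heat_integrand_mult_le[OF n r norm_r_symbol_le[where P=P and l=l, OF K]])
  moreover have "norm (heat_integrand n i r s l * s_symbol i P l) \<le> ?W"
    by (rule norm_heat_integrand_mult_le[OF n r norm_s_symbol_le[where P=P and l=l, OF K]])
  ultimately show ?thesis
    by (intro order_trans[OF norm_triangle_ineq])
      (auto simp: norm_mult distrib_right intro!: add_mono mult_left_mono)
qed

lemma heat_integrand_has_vector_derivative:
  assumes a: "(a has_real_derivative a') (at u)" and b: "(b has_real_derivative b') (at u)"
  shows "((\<lambda>u. heat_integrand n i (a u) (b u) l * P l) has_vector_derivative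
      complex_of_real a' * (heat_integrand n i (a u) (b u) l * r_symbol P l)
      + complex_of_real b' * (heat_integrand n i (a u) (b u) l * s_symbol i P l)) (at u)"
proof -
  let ?G = "\<lambda>u. \<i> * complex_of_real (b u * l $ i) - complex_of_real (a u * psiH (norm l))"
  let ?G' = "\<i> * complex_of_real (b' * l $ i) - complex_of_real (a' * psiH (norm l))"
  have "(?G has_vector_derivative ?G') (at u)"
    by (intro derivative_intros DERIV_cmult_right a b)
  from field_vector_diff_chain_at[OF this DERIV_exp]
  have "((\<lambda>u. exp (?G u) * (complex_of_real (phiH (norm l) ^ n) * P l)) has_vector_derivative
       (?G' * exp (?G u)) * (complex_of_real (phiH (norm l) ^ n) * P l)) (at u)"
    by (intro has_vector_derivative_mult_left) (simp add: o_def)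
  then show ?thesis
    by (simp add: heat_integrand_def r_symbol_def s_symbol_def algebra_simps)
qed

lemma heat_kernel_eq_hfun:
  fixes z :: "real^'m::finite" and i :: 'm
  shows "heat_kernel n 1 x z = hfun n i (norm x ^ 2 / 4) (norm z)"
proof -
  obtain f :: "real^'m \<Rightarrow> real^'m" where f: "orthogonal_transformation f" "f z = norm z *\<^sub>R axis i 1"
    using orthogonal_transformation_exists[of z "norm z *\<^sub>R axis i 1"] by auto
  define H where "H l = heat_integrand n i (norm x ^ 2 / 4) (norm z) l" for l
  have "l \<bullet> z = f l \<bullet> f z" for l
    using f(1) by (simp add: orthogonal_transformation_def)
  then have "l \<bullet> z = norm z * f l $ i" and "norm (f l) = norm l" for l
    using f by (simp_all add: inner_axis orthogonal_transformation_norm)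
  then have "heat_kernel n 1 x z = 1 / ((4*pi)^n * (2*pi)^CARD('m)) * Re (\<integral>l. H (f l) \<partial>lborel)"
    by (simp add: heat_kernel_def H_def heat_integrand_def)
  also have "(\<integral>l. H (f l) \<partial>lborel) = (\<integral>l. H l \<partial>lborel)"
    using f(1) by (rule integral_orthogonal_transformation) (simp add: H_def)
  finally show ?thesis
    by (simp add: hfun_eq_heat_moment heat_moment_def H_def)
qed

section \<open>Derivatives along paths in the \<open>(r, s)\<close>-plane\<close>

text \<open>The bound \<open>a > -1/2\<close> keeps
  \<open>exp (-a \<psi>(|\<lambda>|)) \<phi>(|\<lambda>|)\<^sup>n\<close> integrable, locally uniformly in \<open>u\<close>, because \<open>\<psi>(t) \<le> 1 + t\<close> and
  \<open>\<phi>(t) \<le> 4 (1 + t) e\<^sup>-\<^sup>t\<close>.\<close>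

locale heat_path =
  fixes T :: "real set" and a a' b b' :: "real \<Rightarrow> real"
  assumes open_T: "open T"
    and a_deriv: "\<And>u. u \<in> T \<Longrightarrow> (a has_real_derivative a' u) (at u)"
    and b_deriv: "\<And>u. u \<in> T \<Longrightarrow> (b has_real_derivative b' u) (at u)"
    and a'_cont: "continuous_on T a'" and b'_cont: "continuous_on T b'"
    and a_gt: "\<And>u. u \<in> T \<Longrightarrow> a u > -1/2"
begin

lemma derivatives_bounded_near:
  assumes "u0 \<in> T"
  obtains d M where "d > 0" "cball u0 d \<subseteq> T" "\<And>u. u \<in> cball u0 d \<Longrightarrow> \<bar>a' u\<bar> + \<bar>b' u\<bar> \<le> M"
proof -
  obtain d where d: "d > 0" "cball u0 d \<subseteq> T"
    using open_T assms open_contains_cball by blast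
  have "compact ((\<lambda>u. \<bar>a' u\<bar> + \<bar>b' u\<bar>) ` cball u0 d)"
    using d a'_cont b'_cont by (intro compact_continuous_image continuous_intros) (auto intro: continuous_on_subset)
  then obtain M where "\<And>u. u \<in> cball u0 d \<Longrightarrow> \<bar>a' u\<bar> + \<bar>b' u\<bar> \<le> M"
    by (fastforce dest: compact_imp_bounded simp: bounded_real)
  with d that show ?thesis
    by blast
qed

lemma integral_heat_integrand_has_vector_derivative:
  assumes n: "n \<ge> 1" and P: "poly_growth P k" and u0: "u0 \<in> T"
  shows "((\<lambda>u. \<integral>l. heat_integrand n i (a u) (b u) l * P l \<partial>lborel) has_vector_derivative
      complex_of_real (a' u0) * (\<integral>l. heat_integrand n i (a u0) (b u0) l * r_symbol P l \<partial>lborel)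
      + complex_of_real (b' u0) * (\<integral>l. heat_integrand n i (a u0) (b u0) l * s_symbol i P l \<partial>lborel)) (at u0)"
proof -
  obtain d M where d: "d > 0" "cball u0 d \<subseteq> T" and M: "\<And>u. u \<in> cball u0 d \<Longrightarrow> \<bar>a' u\<bar> + \<bar>b' u\<bar> \<le> M"
    using derivatives_bounded_near[OF u0] by blast
  obtain K where K: "\<And>l. norm (P l) \<le> K * (1 + norm l) ^ k" and [measurable]: "P \<in> borel_measurable borel"
    using P by (auto simp: poly_growth_def)
  have [measurable]: "r_symbol P \<in> borel_measurable borel" "s_symbol i P \<in> borel_measurable borel"
    using poly_growth_r_symbol[OF P] poly_growth_s_symbol[OF P] by (auto simp: poly_growth_def)
  define W where "W l = 4 * exp (1/2) * K * ((1 + norm l) ^ Suc (Suc k) * exp (- norm l / 2))" for l :: "real^'a"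
  have "0 \<le> K"
    using order_trans[OF norm_ge_zero K[of 0]] by simp
  then have W_nonneg: "0 \<le> W l" for l
    by (simp add: W_def)
  have in_T: "u \<in> T" if "u \<in> ball u0 d" for u
    using that d by auto
  have a_ge: "a u \<ge> -1/2" if "u \<in> ball u0 d" for u
    using a_gt[OF in_T[OF that]] by simp
  let ?f' = "\<lambda>u l. complex_of_real (a' u) * (heat_integrand n i (a u) (b u) l * r_symbol P l)
      + complex_of_real (b' u) * (heat_integrand n i (a u) (b u) l * s_symbol i P l)"
  have "((\<lambda>u. \<integral>l. heat_integrand n i (a u) (b u) l * P l \<partial>lborel) has_vector_derivative
      (\<integral>l. ?f' u0 l \<partial>lborel)) (at u0)"
  proof (rule has_vector_derivative_integral[OF d(1), where w="\<lambda>l. M * W l"])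
    show "((\<lambda>u. heat_integrand n i (a u) (b u) l * P l) has_vector_derivative ?f' u l) (at u)"
      if "u \<in> ball u0 d" for u l
      using in_T[OF that] by (intro heat_integrand_has_vector_derivative a_deriv b_deriv)
    show "integrable lborel (\<lambda>l. M * W l)"
      unfolding W_def by (intro integrable_mult_right integrable_power_exp_neg_norm)
    show "integrable lborel (\<lambda>l. heat_integrand n i (a u0) (b u0) l * P l)"
      using a_ge[of u0] d by (intro integrable_heat_integrand[OF n _ P]) auto
    show "norm (?f' u l) \<le> M * W l" if u: "u \<in> ball u0 d" for u l
    proof -
      have "norm (?f' u l) \<le> (\<bar>a' u\<bar> + \<bar>b' u\<bar>) * W l"
        unfolding W_def by (rule norm_heat_integrand_symbols_le[where P=P and l=l, OF n a_ge[OF u] K[of l]])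
      also have "\<dots> \<le> M * W l"
        using M[of u] u W_nonneg[of l] by (intro mult_right_mono) auto
      finally show ?thesis .
    qed
  qed measurable
  moreover have "(\<integral>l. ?f' u0 l \<partial>lborel)
      = complex_of_real (a' u0) * (\<integral>l. heat_integrand n i (a u0) (b u0) l * r_symbol P l \<partial>lborel)
      + complex_of_real (b' u0) * (\<integral>l. heat_integrand n i (a u0) (b u0) l * s_symbol i P l \<partial>lborel)"
    using a_gt[OF u0] integrable_heat_integrand[OF n _ poly_growth_r_symbol[OF P]]
      integrable_heat_integrand[OF n _ poly_growth_s_symbol[OF P]] by simp
  ultimately show ?thesis
    by simp
qed

lemma heat_moment_has_real_derivative:
  assumes n: "n \<ge> 1" and P: "poly_growth P k" and u0: "u0 \<in> T"
  shows "((\<lambda>u. heat_moment n i P (a u) (b u)) has_real_derivative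
      a' u0 * heat_moment n i (r_symbol P) (a u0) (b u0)
      + b' u0 * heat_moment n i (s_symbol i P) (a u0) (b u0)) (at u0)"
proof -
  let ?c = "1 / ((4*pi)^n * (2*pi)^CARD('a)) :: real"
  from bounded_linear.has_vector_derivative[OF bounded_linear_Re
      integral_heat_integrand_has_vector_derivative[OF n P u0, of i]]
  have "((\<lambda>u. ?c * Re (\<integral>l. heat_integrand n i (a u) (b u) l * P l \<partial>lborel)) has_real_derivative
      ?c * Re (complex_of_real (a' u0) * (\<integral>l. heat_integrand n i (a u0) (b u0) l * r_symbol P l \<partial>lborel)
      + complex_of_real (b' u0) * (\<integral>l. heat_integrand n i (a u0) (b u0) l * s_symbol i P l \<partial>lborel))) (at u0)"
    by (intro DERIV_cmult) (simp add: has_real_derivative_iff_has_vector_derivative)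
  then show ?thesis
    by (simp add: heat_moment_def algebra_simps)
qed

lemma deriv_heat_moment:
  assumes "n \<ge> 1" and "poly_growth P k" and "u0 \<in> T"
  shows "deriv (\<lambda>u. heat_moment n i P (a u) (b u)) u0 =
      a' u0 * heat_moment n i (r_symbol P) (a u0) (b u0)
      + b' u0 * heat_moment n i (s_symbol i P) (a u0) (b u0)"
  using heat_moment_has_real_derivative[OF assms] by (rule DERIV_imp_deriv)

lemma deriv2_heat_moment:
  assumes n: "n \<ge> 1" and P: "poly_growth P k" and u0: "u0 \<in> T"
    and a'': "(a' has_real_derivative a'') (at u0)" and b'': "(b' has_real_derivative b'') (at u0)"
  shows "deriv (deriv (\<lambda>u. heat_moment n i P (a u) (b u))) u0 =
      a'' * heat_moment n i (r_symbol P) (a u0) (b u0)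
      + b'' * heat_moment n i (s_symbol i P) (a u0) (b u0)
      + (a' u0)\<^sup>2 * heat_moment n i (r_symbol (r_symbol P)) (a u0) (b u0)
      + 2 * a' u0 * b' u0 * heat_moment n i (r_symbol (s_symbol i P)) (a u0) (b u0)
      + (b' u0)\<^sup>2 * heat_moment n i (s_symbol i (s_symbol i P)) (a u0) (b u0)"
proof -
  let ?G = "\<lambda>u. a' u * heat_moment n i (r_symbol P) (a u) (b u)
      + b' u * heat_moment n i (s_symbol i P) (a u) (b u)"
  have "\<forall>\<^sub>F u in nhds u0. u \<in> T"
    using open_T u0 by (rule eventually_nhds_in_open)
  then have "\<forall>\<^sub>F u in nhds u0. deriv (\<lambda>u. heat_moment n i P (a u) (b u)) u = ?G u"
    by eventually_elim (rule deriv_heat_moment[OF n P])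
  then have "deriv (deriv (\<lambda>u. heat_moment n i P (a u) (b u))) u0 = deriv ?G u0"
    by (rule deriv_cong_ev) simp
  also have "\<dots> = a'' * heat_moment n i (r_symbol P) (a u0) (b u0)
      + (a' u0 * heat_moment n i (r_symbol (r_symbol P)) (a u0) (b u0)
        + b' u0 * heat_moment n i (s_symbol i (r_symbol P)) (a u0) (b u0)) * a' u0
      + (b'' * heat_moment n i (s_symbol i P) (a u0) (b u0)
      + (a' u0 * heat_moment n i (r_symbol (s_symbol i P)) (a u0) (b u0)
        + b' u0 * heat_moment n i (s_symbol i (s_symbol i P)) (a u0) (b u0)) * b' u0)"
    by (intro DERIV_imp_deriv DERIV_add
        DERIV_mult[OF a'' heat_moment_has_real_derivative[OF n poly_growth_r_symbol[OF P] u0]]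
        DERIV_mult[OF b'' heat_moment_has_real_derivative[OF n poly_growth_s_symbol[OF P] u0]])
  finally show ?thesis
    by (simp add: r_symbol_s_symbol_commute power2_eq_square algebra_simps)
qed

end

lemma heat_path_r_line: "heat_path {-1/2<..} (\<lambda>u. u) (\<lambda>_. 1) (\<lambda>_. s) (\<lambda>_. 0)"
  by unfold_locales (auto intro!: derivative_eq_intros continuous_intros)

lemma heat_path_s_line: "r > -1/2 \<Longrightarrow> heat_path UNIV (\<lambda>_. r) (\<lambda>_. 0) (\<lambda>u. u) (\<lambda>_. 1)"
  by unfold_locales (auto intro!: derivative_eq_intros continuous_intros)

lemma hder_eq_heat_moment:
  assumes n: "n \<ge> 1" and r: "r > -1/2"
  shows "hder n i 1 0 r s = heat_moment n i (r_symbol (\<lambda>_. 1)) r s"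
    and "hder n i 0 1 r s = heat_moment n i (s_symbol i (\<lambda>_. 1)) r s"
    and "hder n i 2 0 r s = heat_moment n i (r_symbol (r_symbol (\<lambda>_. 1))) r s"
    and "hder n i 0 2 r s = heat_moment n i (s_symbol i (s_symbol i (\<lambda>_. 1))) r s"
    and "hder n i 1 1 r s = heat_moment n i (r_symbol (s_symbol i (\<lambda>_. 1))) r s"
proof -
  note r_line = heat_path_r_line[of s] and s_line = heat_path_s_line[OF r]
  have r_in: "r \<in> {-1/2<..}"
    using r by simp
  show "hder n i 1 0 r s = heat_moment n i (r_symbol (\<lambda>_. 1)) r s"
    using heat_path.deriv_heat_moment[OF r_line n poly_growth_one r_in]
    by (simp add: hder_def hfun_eq_heat_moment)
  show "hder n i 2 0 r s = heat_moment n i (r_symbol (r_symbol (\<lambda>_. 1))) r s"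
    using heat_path.deriv2_heat_moment[OF r_line n poly_growth_one r_in DERIV_const DERIV_const]
    by (simp add: hder_def hfun_eq_heat_moment numeral_2_eq_2)
  show "hder n i 0 1 r s = heat_moment n i (s_symbol i (\<lambda>_. 1)) r s"
    using heat_path.deriv_heat_moment[OF s_line n poly_growth_one UNIV_I]
    by (simp add: hder_def hfun_eq_heat_moment)
  show "hder n i 0 2 r s = heat_moment n i (s_symbol i (s_symbol i (\<lambda>_. 1))) r s"
    using heat_path.deriv2_heat_moment[OF s_line n poly_growth_one UNIV_I DERIV_const DERIV_const]
    by (simp add: hder_def hfun_eq_heat_moment numeral_2_eq_2)
  have "\<forall>\<^sub>F r' in nhds r. r' \<in> {-1/2<..}"
    using r_in by (intro eventually_nhds_in_open) auto
  then have "\<forall>\<^sub>F r' in nhds r. deriv (\<lambda>s'. hfun n i r' s') s = heat_moment n i (s_symbol i (\<lambda>_. 1)) r' s"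
    by eventually_elim
      (simp add: hfun_eq_heat_moment heat_path.deriv_heat_moment[OF heat_path_s_line n poly_growth_one UNIV_I])
  then have "hder n i 1 1 r s = deriv (\<lambda>r'. heat_moment n i (s_symbol i (\<lambda>_. 1)) r' s) r"
    unfolding hder_def by (simp add: deriv_cong_ev)
  also have "\<dots> = heat_moment n i (r_symbol (s_symbol i (\<lambda>_. 1))) r s"
    using heat_path.deriv_heat_moment[OF r_line n poly_growth_s_symbol[OF poly_growth_one] r_in]
    by simp
  finally show "hder n i 1 1 r s = heat_moment n i (r_symbol (s_symbol i (\<lambda>_. 1))) r s" .
qed

context heat_path
begin

lemma deriv_hfun:
  assumes n: "n \<ge> 1" and u0: "u0 \<in> T"
  shows "deriv (\<lambda>u. hfun n i (a u) (b u)) u0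
    = a' u0 * hder n i 1 0 (a u0) (b u0) + b' u0 * hder n i 0 1 (a u0) (b u0)"
  unfolding hfun_eq_heat_moment hder_eq_heat_moment[OF n a_gt[OF u0]]
  by (rule deriv_heat_moment[OF n poly_growth_one u0])

lemma deriv2_hfun:
  assumes n: "n \<ge> 1" and u0: "u0 \<in> T"
    and a'': "(a' has_real_derivative a'') (at u0)" and b'': "(b' has_real_derivative b'') (at u0)"
  shows "deriv (deriv (\<lambda>u. hfun n i (a u) (b u))) u0
    = a'' * hder n i 1 0 (a u0) (b u0) + b'' * hder n i 0 1 (a u0) (b u0)
      + (a' u0)\<^sup>2 * hder n i 2 0 (a u0) (b u0) + 2 * a' u0 * b' u0 * hder n i 1 1 (a u0) (b u0)
      + (b' u0)\<^sup>2 * hder n i 0 2 (a u0) (b u0)"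
  unfolding hfun_eq_heat_moment hder_eq_heat_moment[OF n a_gt[OF u0]]
  by (rule deriv2_heat_moment[OF n poly_growth_one u0 a'' b''])

end

lemma norm_add_scaleR_power2:
  "norm (x + u *\<^sub>R e) ^ 2 = x \<bullet> x + 2 * u * (x \<bullet> e) + u\<^sup>2 * (e \<bullet> e)"
  unfolding power2_norm_eq_inner by (simp add: inner_commute power2_eq_square algebra_simps)

lemma has_real_derivative_norm_add_scaleR:
  assumes "z + u *\<^sub>R w \<noteq> 0"
  shows "((\<lambda>u. norm (z + u *\<^sub>R w)) has_real_derivative (z \<bullet> w + u * (w \<bullet> w)) / norm (z + u *\<^sub>R w)) (at u)"
proof -
  have sqrt_eq: "sqrt (z \<bullet> z + 2 * u * (z \<bullet> w) + u\<^sup>2 * (w \<bullet> w)) = norm (z + u *\<^sub>R w)" for u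
    by (simp flip: norm_add_scaleR_power2)
  have "0 < sqrt (z \<bullet> z + 2 * u * (z \<bullet> w) + u\<^sup>2 * (w \<bullet> w))"
    using assms by (simp add: sqrt_eq)
  then have "((\<lambda>u. sqrt (z \<bullet> z + 2 * u * (z \<bullet> w) + u\<^sup>2 * (w \<bullet> w))) has_real_derivative
      (z \<bullet> w + u * (w \<bullet> w)) / sqrt (z \<bullet> z + 2 * u * (z \<bullet> w) + u\<^sup>2 * (w \<bullet> w))) (at u)"
    by (auto intro!: derivative_eq_intros simp: field_simps)
  then show ?thesis
    by (simp only: sqrt_eq)
qed

lemma hfun_along_line:
  fixes x e :: "real^'v" and z w :: "real^'m::finite" and i :: 'm
  assumes n: "n \<ge> 1" and z: "z \<noteq> 0"
  defines "F \<equiv> \<lambda>u. hfun n i (norm (x + u *\<^sub>R e) ^ 2 / 4) (norm (z + u *\<^sub>R w))"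
    and "R \<equiv> norm x ^ 2 / 4"
  shows "deriv F 0 = (x \<bullet> e) / 2 * hder n i 1 0 R (norm z) + (z \<bullet> w) / norm z * hder n i 0 1 R (norm z)"
    and "deriv (deriv F) 0 = (e \<bullet> e) / 2 * hder n i 1 0 R (norm z)
      + ((w \<bullet> w) / norm z - (z \<bullet> w)\<^sup>2 / norm z ^ 3) * hder n i 0 1 R (norm z)
      + ((x \<bullet> e) / 2)\<^sup>2 * hder n i 2 0 R (norm z)
      + 2 * ((x \<bullet> e) / 2) * ((z \<bullet> w) / norm z) * hder n i 1 1 R (norm z)
      + ((z \<bullet> w) / norm z)\<^sup>2 * hder n i 0 2 R (norm z)"
proof -
  let ?a = "\<lambda>u. norm (x + u *\<^sub>R e) ^ 2 / 4" and ?a' = "\<lambda>u. (x \<bullet> e + u * (e \<bullet> e)) / 2"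
  let ?b = "\<lambda>u. norm (z + u *\<^sub>R w)" and ?b' = "\<lambda>u. (z \<bullet> w + u * (w \<bullet> w)) / norm (z + u *\<^sub>R w)"
  let ?T = "{u. z + u *\<^sub>R w \<noteq> 0}"
  have a_deriv: "(?a has_real_derivative ?a' u) (at u)" for u
    unfolding norm_add_scaleR_power2 by (auto intro!: derivative_eq_intros simp: field_simps)
  interpret heat_path ?T ?a ?a' ?b ?b'
  proof
    show "open ?T"
      by (intro open_Collect_neq continuous_intros)
    show "continuous_on ?T ?a'" "continuous_on ?T ?b'"
      by (intro continuous_intros; simp)+
    show "?a u > -1/2" for u
      using zero_le_power2[of "norm (x + u *\<^sub>R e)"] by linarith
  qed (auto intro: a_deriv has_real_derivative_norm_add_scaleR)
  have T0: "0 \<in> ?T"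
    using z by simp
  show "deriv F 0 = (x \<bullet> e) / 2 * hder n i 1 0 R (norm z) + (z \<bullet> w) / norm z * hder n i 0 1 R (norm z)"
    using deriv_hfun[OF n T0] by (simp add: F_def R_def)
  have a'': "(?a' has_real_derivative (e \<bullet> e) / 2) (at 0)"
    by (auto intro!: derivative_eq_intros)
  have b'': "(?b' has_real_derivative (w \<bullet> w) / norm z - (z \<bullet> w)\<^sup>2 / norm z ^ 3) (at 0)"
    using z has_real_derivative_norm_add_scaleR[of z 0 w]
    by (auto intro!: derivative_eq_intros simp: field_simps power2_eq_square power3_eq_cube)
  show "deriv (deriv F) 0 = (e \<bullet> e) / 2 * hder n i 1 0 R (norm z)
      + ((w \<bullet> w) / norm z - (z \<bullet> w)\<^sup>2 / norm z ^ 3) * hder n i 0 1 R (norm z)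
      + ((x \<bullet> e) / 2)\<^sup>2 * hder n i 2 0 R (norm z)
      + 2 * ((x \<bullet> e) / 2) * ((z \<bullet> w) / norm z) * hder n i 1 1 R (norm z)
      + ((z \<bullet> w) / norm z)\<^sup>2 * hder n i 0 2 R (norm z)"
    using deriv2_hfun[OF n T0 a'' b'', of i] by (simp add: F_def R_def)
qed

section \<open>H-type groups\<close>

lemma sum_power2_vec_nth: "(\<Sum>j\<in>UNIV. (x $ j)\<^sup>2) = norm (x :: real^'n) ^ 2"
  by (simp only: power2_norm_eq_inner) (simp add: inner_vec_def power2_eq_square)

lemma Htype_bilinear: "Htype B \<Longrightarrow> bilinear B"
  by (simp add: Htype_def)

lemma Htype_self_zero:
  assumes "Htype B"
  shows "B y y = 0"
proof -
  have "B y y = - B y y"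
    using assms unfolding Htype_def by blast
  then show ?thesis
    by (simp add: vec_eq_iff)
qed

lemma Jmap_nth: "Jmap B z x $ j = z \<bullet> B x (axis j 1)"
  by (simp add: Jmap_def)

lemma norm_Jmap:
  assumes "Htype B"
  shows "norm (Jmap B z x) = norm z * norm x"
proof (cases "z = 0")
  case False
  have "Jmap B z x = norm z *\<^sub>R Jmap B (z /\<^sub>R norm z) x"
    using False by (simp add: Jmap_def vec_eq_iff)
  moreover have "norm (Jmap B (z /\<^sub>R norm z) x) = norm x"
    using assms False by (simp add: Htype_def)
  ultimately show ?thesis
    by simp
next
  case True
  have "Jmap B 0 x = 0"
    by (simp add: Jmap_def vec_eq_iff)
  with True show ?thesis
    by simp
qed

lemma inner_Jmap_self:
  assumes "Htype B"
  shows "x \<bullet> Jmap B z x = 0"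
proof -
  have lin: "linear (B x)"
    using Htype_bilinear[OF assms] by (simp add: bilinear_def)
  have "x \<bullet> Jmap B z x = (\<Sum>j\<in>UNIV. x $ j * Jmap B z x $ j)"
    by (simp only: inner_vec_def inner_real_def)
  also have "\<dots> = (\<Sum>j\<in>UNIV. z \<bullet> B x (x $ j *\<^sub>R axis j 1))"
    by (simp add: Jmap_nth linear_scale[OF lin])
  also have "\<dots> = z \<bullet> B x (\<Sum>j\<in>UNIV. x $ j *\<^sub>R axis j 1)"
    by (simp add: inner_sum_right linear_sum[OF lin])
  also have "\<dots> = z \<bullet> B x x"
    using basis_expansion[of x] by (simp add: scalar_mult_eq_scaleR)
  finally show ?thesis
    by (simp add: Htype_self_zero[OF assms])
qed

lemma sum_norm_B_axis_power2:
  fixes B :: "real^'v \<Rightarrow> real^'v \<Rightarrow> real^'m::finite"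
  assumes "Htype B"
  shows "(\<Sum>j\<in>UNIV. norm (B x (axis j 1)) ^ 2) = real CARD('m) * norm x ^ 2"
proof -
  have "(\<Sum>j\<in>UNIV. norm (B x (axis j 1)) ^ 2) = (\<Sum>j\<in>UNIV. \<Sum>k\<in>UNIV. (Jmap B (axis k 1) x $ j)\<^sup>2)"
    by (simp add: sum_power2_vec_nth[symmetric] Jmap_nth inner_axis')
  also have "\<dots> = (\<Sum>k\<in>(UNIV::'m set). norm (Jmap B (axis k 1) x) ^ 2)"
    by (subst sum.swap) (simp add: sum_power2_vec_nth)
  also have "\<dots> = real CARD('m) * norm x ^ 2"
    by (simp add: norm_Jmap[OF assms])
  finally show ?thesis .
qed

lemma Xfield_heat_kernel:
  fixes B :: "real^'v \<Rightarrow> real^'v \<Rightarrow> real^'m::finite" and n :: nat and i :: 'm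
    and x :: "real^'v" and z :: "real^'m" and j :: 'v
  assumes H: "Htype B"
  defines "p \<equiv> \<lambda>g. heat_kernel n 1 (fst g) (snd g)"
    and "F \<equiv> \<lambda>u. hfun n i (norm (x + u *\<^sub>R axis j 1) ^ 2 / 4) (norm (z + u *\<^sub>R ((1/2) *\<^sub>R B x (axis j 1))))"
  shows "Xfield B j p (x, z) = deriv F 0"
    and "Xfield B j (Xfield B j p) (x, z) = deriv (deriv F) 0"
proof -
  let ?e = "axis j 1 :: real^'v"
  let ?\<gamma> = "\<lambda>t. (x + t *\<^sub>R ?e, z + (t/2) *\<^sub>R B x ?e)"
  have bl: "bilinear B"
    using Htype_bilinear[OF H] .
  have flow: "hmul B (?\<gamma> t) (s *\<^sub>R ?e, 0) = ?\<gamma> (t + s)" for t s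
  proof -
    have "B (x + t *\<^sub>R ?e) (s *\<^sub>R ?e) = s *\<^sub>R B x ?e"
      using bl Htype_self_zero[OF H] by (simp add: bilinear_ladd bilinear_rmul bilinear_lmul)
    then show ?thesis
      by (simp add: hmul_def algebra_simps add_divide_distrib flip: scaleR_add_left)
  qed
  have p_flow: "p (?\<gamma> t) = F t" for t
    by (simp add: p_def F_def heat_kernel_eq_hfun[of _ _ _ i])
  have X_flow: "Xfield B j p (?\<gamma> t) = deriv F t" for t
  proof -
    have "(\<lambda>s. p (hmul B (?\<gamma> t) (s *\<^sub>R ?e, 0))) = (\<lambda>s. F (s + t))"
      by (simp add: flow p_flow add.commute)
    then show ?thesis
      unfolding Xfield_def using DERIV_shift[of F _ 0 t] by (simp add: deriv_def)
  qed
  show "Xfield B j p (x, z) = deriv F 0"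
    using X_flow[of 0] by simp
  have flow0: "hmul B (x, z) (s *\<^sub>R ?e, 0) = ?\<gamma> s" for s
    using flow[of 0 s] by simp
  show "Xfield B j (Xfield B j p) (x, z) = deriv (deriv F) 0"
    unfolding Xfield_def[of B j "Xfield B j p"] flow0 X_flow by simp
qed

lemma Xfield_heat_kernel_eq:
  fixes B :: "real^'v \<Rightarrow> real^'v \<Rightarrow> real^'m::finite" and n :: nat and i :: 'm
    and x :: "real^'v" and z :: "real^'m" and j :: 'v
  assumes H: "Htype B" and n: "n \<ge> 1" and z: "z \<noteq> 0"
  defines "p \<equiv> \<lambda>g. heat_kernel n 1 (fst g) (snd g)" and "R \<equiv> norm x ^ 2 / 4"
    and "\<beta> \<equiv> Jmap B z x $ j / (2 * norm z)"
  shows "Xfield B j p (x, z) = x $ j / 2 * hder n i 1 0 R (norm z) + \<beta> * hder n i 0 1 R (norm z)"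
    and "Xfield B j (Xfield B j p) (x, z) = 1/2 * hder n i 1 0 R (norm z)
      + (norm (B x (axis j 1)) ^ 2 / (4 * norm z) - \<beta>\<^sup>2 / norm z) * hder n i 0 1 R (norm z)
      + (x $ j / 2)\<^sup>2 * hder n i 2 0 R (norm z) + 2 * (x $ j / 2) * \<beta> * hder n i 1 1 R (norm z)
      + \<beta>\<^sup>2 * hder n i 0 2 R (norm z)"
proof -
  let ?e = "axis j 1 :: real^'v" and ?w = "(1/2) *\<^sub>R B x (axis j 1)"
  have "x \<bullet> ?e = x $ j" "?e \<bullet> ?e = 1"
    by (simp_all add: cart_eq_inner_axis)
  moreover have "(z \<bullet> ?w) / norm z = \<beta>"
    and "(?w \<bullet> ?w) / norm z - (z \<bullet> ?w)\<^sup>2 / norm z ^ 3 = norm (B x ?e) ^ 2 / (4 * norm z) - \<beta>\<^sup>2 / norm z"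
    using z by (simp_all add: \<beta>_def Jmap_nth power2_norm_eq_inner[symmetric]
      power_divide field_simps power2_eq_square power3_eq_cube)
  ultimately show "Xfield B j p (x, z) = x $ j / 2 * hder n i 1 0 R (norm z) + \<beta> * hder n i 0 1 R (norm z)"
    and "Xfield B j (Xfield B j p) (x, z) = 1/2 * hder n i 1 0 R (norm z)
      + (norm (B x (axis j 1)) ^ 2 / (4 * norm z) - \<beta>\<^sup>2 / norm z) * hder n i 0 1 R (norm z)
      + (x $ j / 2)\<^sup>2 * hder n i 2 0 R (norm z) + 2 * (x $ j / 2) * \<beta> * hder n i 1 1 R (norm z)
      + \<beta>\<^sup>2 * hder n i 0 2 R (norm z)"
    using Xfield_heat_kernel[OF H, where n=n and i=i and x=x and z=z and j=j, folded p_def]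
      hfun_along_line[OF n z, where i=i and x=x and e="?e" and w="?w"]
    by (simp_all add: R_def)
qed

lemma Htype_coefficient_sums:
  fixes B :: "real^'v \<Rightarrow> real^'v \<Rightarrow> real^'m::finite"
  assumes H: "Htype B" and z: "z \<noteq> 0"
  shows "(\<Sum>j\<in>UNIV. (x $ j / 2)\<^sup>2) = norm x ^ 2 / 4"
    and "(\<Sum>j\<in>UNIV. (Jmap B z x $ j / (2 * norm z))\<^sup>2) = norm x ^ 2 / 4"
    and "(\<Sum>j\<in>UNIV. x $ j / 2 * (Jmap B z x $ j / (2 * norm z))) = 0"
    and "(\<Sum>j\<in>UNIV. norm (B x (axis j 1)) ^ 2 / (4 * norm z)) = real CARD('m) * (norm x ^ 2 / 4) / norm z"
proof -
  show "(\<Sum>j\<in>UNIV. (x $ j / 2)\<^sup>2) = norm x ^ 2 / 4"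
    by (simp add: power_divide sum_divide_distrib[symmetric] sum_power2_vec_nth)
  show "(\<Sum>j\<in>UNIV. (Jmap B z x $ j / (2 * norm z))\<^sup>2) = norm x ^ 2 / 4"
    using z by (simp add: power_divide sum_divide_distrib[symmetric] sum_power2_vec_nth norm_Jmap[OF H]
      power_mult_distrib)
  have "(\<Sum>j\<in>UNIV. x $ j * Jmap B z x $ j) = 0"
    using inner_Jmap_self[OF H, of x z] by (simp add: inner_vec_def)
  then show "(\<Sum>j\<in>UNIV. x $ j / 2 * (Jmap B z x $ j / (2 * norm z))) = 0"
    by (simp add: sum_divide_distrib[symmetric])
  show "(\<Sum>j\<in>UNIV. norm (B x (axis j 1)) ^ 2 / (4 * norm z)) = real CARD('m) * (norm x ^ 2 / 4) / norm z"
    by (simp add: sum_divide_distrib[symmetric] sum_norm_B_axis_power2[OF H])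
qed

lemma gradsq_heat_kernel:
  fixes B :: "real^'v \<Rightarrow> real^'v \<Rightarrow> real^'m::finite" and n :: nat and i :: 'm
    and x :: "real^'v" and z :: "real^'m"
  assumes H: "Htype B" and n: "n \<ge> 1" and z: "z \<noteq> 0"
  defines "R \<equiv> norm x ^ 2 / 4"
  shows "gradsq B (\<lambda>g. heat_kernel n 1 (fst g) (snd g)) (x, z)
    = R * ((hder n i 1 0 R (norm z))\<^sup>2 + (hder n i 0 1 R (norm z))\<^sup>2)"
proof -
  define \<alpha> \<beta> where "\<alpha> j = x $ j / 2" and "\<beta> j = Jmap B z x $ j / (2 * norm z)" for j
  define h\<^sub>r h\<^sub>s where "h\<^sub>r = hder n i 1 0 R (norm z)" and "h\<^sub>s = hder n i 0 1 R (norm z)"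
  have "Xfield B j (\<lambda>g. heat_kernel n 1 (fst g) (snd g)) (x, z) = \<alpha> j * h\<^sub>r + \<beta> j * h\<^sub>s" for j
    unfolding R_def \<alpha>_def \<beta>_def h\<^sub>r_def h\<^sub>s_def by (rule Xfield_heat_kernel_eq(1)[OF H n z])
  then have "gradsq B (\<lambda>g. heat_kernel n 1 (fst g) (snd g)) (x, z)
      = (\<Sum>j\<in>UNIV. h\<^sub>r\<^sup>2 * (\<alpha> j)\<^sup>2 + 2 * h\<^sub>r * h\<^sub>s * (\<alpha> j * \<beta> j) + h\<^sub>s\<^sup>2 * (\<beta> j)\<^sup>2)"
    unfolding gradsq_def by (intro sum.cong) (simp_all add: power2_eq_square algebra_simps)
  also have "\<dots> = h\<^sub>r\<^sup>2 * (\<Sum>j\<in>UNIV. (\<alpha> j)\<^sup>2) + 2 * h\<^sub>r * h\<^sub>s * (\<Sum>j\<in>UNIV. \<alpha> j * \<beta> j)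
      + h\<^sub>s\<^sup>2 * (\<Sum>j\<in>UNIV. (\<beta> j)\<^sup>2)"
    by (simp add: sum.distrib sum_distrib_left)
  also have "\<dots> = R * (h\<^sub>r\<^sup>2 + h\<^sub>s\<^sup>2)"
    unfolding \<alpha>_def \<beta>_def Htype_coefficient_sums[OF H z] R_def by (simp add: algebra_simps)
  finally show ?thesis
    by (simp add: h\<^sub>r_def h\<^sub>s_def)
qed

lemma subLap_heat_kernel:
  fixes B :: "real^'v \<Rightarrow> real^'v \<Rightarrow> real^'m::finite" and n :: nat and i :: 'm
    and x :: "real^'v" and z :: "real^'m"
  assumes H: "Htype B" and dim: "CARD('v) = 2 * n" and n: "n \<ge> 1" and z: "z \<noteq> 0"
  defines "R \<equiv> norm x ^ 2 / 4"
  shows "subLap B (\<lambda>g. heat_kernel n 1 (fst g) (snd g)) (x, z)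
    = real n * hder n i 1 0 R (norm z) + R * (real CARD('m) - 1) / norm z * hder n i 0 1 R (norm z)
      + R * hder n i 2 0 R (norm z) + R * hder n i 0 2 R (norm z)"
proof -
  define \<alpha> \<beta> \<nu> where "\<alpha> j = x $ j / 2" and "\<beta> j = Jmap B z x $ j / (2 * norm z)"
    and "\<nu> j = norm (B x (axis j 1)) ^ 2 / (4 * norm z)" for j
  define h\<^sub>r h\<^sub>s h\<^sub>r\<^sub>r h\<^sub>r\<^sub>s h\<^sub>s\<^sub>s where "h\<^sub>r = hder n i 1 0 R (norm z)" and "h\<^sub>s = hder n i 0 1 R (norm z)"
    and "h\<^sub>r\<^sub>r = hder n i 2 0 R (norm z)" and "h\<^sub>r\<^sub>s = hder n i 1 1 R (norm z)" and "h\<^sub>s\<^sub>s = hder n i 0 2 R (norm z)"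
  have "Xfield B j (Xfield B j (\<lambda>g. heat_kernel n 1 (fst g) (snd g))) (x, z)
      = 1/2 * h\<^sub>r + (\<nu> j - (\<beta> j)\<^sup>2 / norm z) * h\<^sub>s + (\<alpha> j)\<^sup>2 * h\<^sub>r\<^sub>r + 2 * \<alpha> j * \<beta> j * h\<^sub>r\<^sub>s + (\<beta> j)\<^sup>2 * h\<^sub>s\<^sub>s" for j
    unfolding R_def \<alpha>_def \<beta>_def \<nu>_def h\<^sub>r_def h\<^sub>s_def h\<^sub>r\<^sub>r_def h\<^sub>r\<^sub>s_def h\<^sub>s\<^sub>s_def
    by (rule Xfield_heat_kernel_eq(2)[OF H n z])
  then have "subLap B (\<lambda>g. heat_kernel n 1 (fst g) (snd g)) (x, z)
      = (\<Sum>j\<in>UNIV. 1/2 * h\<^sub>r + h\<^sub>s * \<nu> j - h\<^sub>s / norm z * (\<beta> j)\<^sup>2 + h\<^sub>r\<^sub>r * (\<alpha> j)\<^sup>2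
          + 2 * h\<^sub>r\<^sub>s * (\<alpha> j * \<beta> j) + h\<^sub>s\<^sub>s * (\<beta> j)\<^sup>2)"
    unfolding subLap_def by (intro sum.cong) (simp_all add: algebra_simps)
  also have "\<dots> = real CARD('v) / 2 * h\<^sub>r + h\<^sub>s * (\<Sum>j\<in>UNIV. \<nu> j) - h\<^sub>s / norm z * (\<Sum>j\<in>UNIV. (\<beta> j)\<^sup>2)
      + h\<^sub>r\<^sub>r * (\<Sum>j\<in>UNIV. (\<alpha> j)\<^sup>2) + 2 * h\<^sub>r\<^sub>s * (\<Sum>j\<in>UNIV. \<alpha> j * \<beta> j) + h\<^sub>s\<^sub>s * (\<Sum>j\<in>UNIV. (\<beta> j)\<^sup>2)"
    by (simp add: sum.distrib sum_subtractf sum_distrib_left)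
  also have "\<dots> = real n * h\<^sub>r + R * (real CARD('m) - 1) / norm z * h\<^sub>s + R * h\<^sub>r\<^sub>r + R * h\<^sub>s\<^sub>s"
    unfolding \<alpha>_def \<beta>_def \<nu>_def Htype_coefficient_sums[OF H z] R_def dim using z by (simp add: field_simps)
  finally show ?thesis
    by (simp add: h\<^sub>r_def h\<^sub>s_def h\<^sub>r\<^sub>r_def h\<^sub>s\<^sub>s_def)
qed

theorem lemma3p3:
  fixes B :: "real^'v \<Rightarrow> real^'v \<Rightarrow> real^'m" and n :: nat and C :: real
    and x :: "real^'v" and z :: "real^'m" and i1 :: 'm
  assumes "Htype B" and "CARD('v) = 2 * n" and "C > 0" and "z \<noteq> 0"
  shows "let p = (\<lambda>g. heat_kernel n 1 (fst g) (snd g) :: real);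
             R = norm x ^ 2 / 4; m = real CARD('m);
             q = (\<lambda>k1 k2. pk n i1 1 k1 k2 x z)
         in - (C/4) * gradsq B p (x, z) / (p (x, z))^2 + (C/2) * subLap B p (x, z) / p (x, z) + ln (p (x, z))
            = - (R*C/4) * ((q 1 0)^2 + (q 0 1)^2) / (q 0 0)^2
              + (C/2) * (R * q 2 0 + R * q 0 2 + real n * q 1 0 + R * (m - 1) / norm z * q 0 1) / q 0 0
              + ln (q 0 0)"
proof -
  \<comment> \<open>The identity holds for every \<open>C\<close>.\<close>
  have n: "n \<ge> 1"
    using assms(2) zero_less_card_finite[where 'a='v] by linarith
  define R where "R = norm x ^ 2 / 4"
  have p: "heat_kernel n 1 x z = pk n i1 1 0 0 x z"
    by (simp add: heat_kernel_eq_hfun[of _ _ _ i1] pk_def hder_def)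
  have q: "pk n i1 1 k1 k2 x z = hder n i1 k1 k2 R (norm z)" for k1 k2
    by (simp add: pk_def R_def)
  show ?thesis
    unfolding Let_def fst_conv snd_conv p
      gradsq_heat_kernel[OF assms(1) n assms(4), of x i1] subLap_heat_kernel[OF assms(1,2) n assms(4), of x i1]
    unfolding R_def[symmetric] q
    by (simp add: algebra_simps)
qed

end
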